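(* Let $\mathcal M$ be a miss-MDP whose missingness function $M$ is simple MAR, and let the estimate $\widehat M$ be computed from a dataset $\mathcal D$ by the AsMAR rule described in the context. Then: (i) For every precision $\varepsilon>0$ and confidence threshold $\delta\in(0,1)$ there exists a number $n^*\in\mathbb N$ such that, if $\mathcal D$ consists of $n^*$ histories generated independently under the fair behaviour policy $\pi_b$, then with probability at least $\delta$ (over the generation of $\mathcal D$) we have $|\widehat M(z\mid s)-M(z\mid s)|\le\varepsilon$ for all states $s\in S$ reachable in $\mathcal M$ and all observations $z\in Z$. (ii) Dually, for every dataset size (number of histories) and every confidence threshold $\delta\in(0,1)$ there exists $\varepsilon>0$ such that, with probability at least $\delta$ over the generation of $\mathcal D$, $|\widehat M(z\mid s)-M(z\mid s)|\le\varepsilon$ for all reachable $s\in S$ and all $z\in Z$.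
   Context: A missingness-MDP (miss-MDP) is a tuple $\mathcal M=(S,A,T,\iota,\varrho,Z,M,\gamma)$ with finite factored state space $S=\prod_{i\in I}S_i$ where $I=\{1,\dots,n\}$ is the set of feature indices, finite action set $A$, transition function $T:S\times A\to\Delta(S)$, initial distribution $\iota\in\Delta(S)$, reward $\varrho:S\times A\to\mathbb R$, discount factor $\gamma\in[0,1)$, observation space $Z=\prod_{i\in I}(S_i\cup\{\bot\})$ ($\bot$ means "missing"), and missingness function $M:S\to\Delta(Z)$ such that for all $s\in S$, all $z$ in the support of $M(s)$ and all $i\in I$, $z_i\in\{s_i,\bot\}$. Write $M(z\mid s)=M(s)(z)$. Let $R=\{0,1\}^n$ and $f_R:Z\to R$ with $f_R(z)_i=0$ iff $z_i=\bot$. A run of $\mathcal M$ under a policy: $s^{(0)}\sim\iota$, $z^{(t)}\sim M(s^{(t)})$, action $a^{(t)}$ chosen by the policy from past observations/actions, $s^{(t+1)}\sim T(s^{(t)},a^{(t)})$; its history is $(z^{(0)},a^{(0)},z^{(1)},a^{(1)},\dots)$. A state is reachable if it is visited with positive probability under some policy. A dataset $\mathcal D=(h_1,\dots,h_k)$ consists of finite histories generated independently under a fixed behaviour policy $\pi_b$ that is fair: every reachable state is visited with positive probability within each generated history. For $z\in Z$, $\#_{\mathcal D}(z)$ is the total number of occurrences of $z$ as an observation in the histories of $\mathcal D$, and $\#_{\mathcal D}(Z')=\sum_{z\in Z'}\#_{\mathcal D}(z)$ for $Z'\subseteq Z$. Let $I_{\text{always}}=\{i\in I:\forall s\in S,\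 \Pr_{z\sim M(s)}(z_i=\bot)=0\}$. $M$ is simple MAR iff for all $s,s'\in S$ with $s_i=s'_i$ for all $i\in I_{\text{always}}$ and all $r\in R$: $\Pr_{z\sim M(s)}(f_R(z)=r)=\Pr_{z\sim M(s')}(f_R(z)=r)$. AsMAR rule: let $\hat I_{\text{always}}=\{i\in I:\#_{\mathcal D}(\{z\in Z: z_i=\bot\})=0\}$. For $s\in S$ and $r\in R$ let $Z_s^r=\{z\in Z:\forall i\in I,\ (i\in\hat I_{\text{always}}\Rightarrow z_i=s_i)\text{ and }(r_i=0\Rightarrow z_i=\bot)\}$ and $\#_{\mathcal D}(s,r)=\#_{\mathcal D}(Z_s^r)$. Then $\widehat M(z\mid s)=\#_{\mathcal D}(s,f_R(z))\big/\sum_{r\in R}\#_{\mathcal D}(s,r)$. *)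

theory Defs
  imports "HOL-Probability.Probability"
begin

text \<open>A state is an element of the product S = PiE UNIV Sv; an observation is a
  function 'i => 'v option, where None stands for the missing value (bottom).\<close>

type_synonym ('i,'v) state = "'i \<Rightarrow> 'v"
type_synonym ('i,'v) obs = "'i \<Rightarrow> 'v option"
type_synonym ('i,'v,'a) hist = "(('i,'v) obs \<times> 'a) list"
type_synonym ('i,'v,'a) policy = "('i,'v,'a) hist \<Rightarrow> ('i,'v) obs \<Rightarrow> 'a pmf"

definition state_space :: "('i \<Rightarrow> 'v set) \<Rightarrow> ('i,'v) state set" where
  "state_space Sv = Pi\<^sub>E UNIV Sv"

definition obs_space :: "('i \<Rightarrow> 'v set) \<Rightarrow> ('i,'v) obs set" where
  "obs_space Sv = Pi\<^sub>E UNIV (\<lambda>i. Some ` Sv i \<union> {None})"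

text \<open>The map f_R : Z -> R = {0,1}^I (True = observed, False = missing).\<close>
definition fR :: "('i,'v) obs \<Rightarrow> ('i \<Rightarrow> bool)" where
  "fR z = (\<lambda>i. z i \<noteq> None)"

definition compatible :: "('i,'v) obs \<Rightarrow> ('i,'v) state \<Rightarrow> bool" where
  "compatible z s \<longleftrightarrow> (\<forall>i. z i = Some (s i) \<or> z i = None)"

definition miss_MDP ::
  "('i::finite \<Rightarrow> 'v set) \<Rightarrow> (('i,'v) state \<Rightarrow> 'a::finite \<Rightarrow> ('i,'v) state pmf)
    \<Rightarrow> ('i,'v) state pmf \<Rightarrow> (('i,'v) state \<Rightarrow> ('i,'v) obs pmf) \<Rightarrow> bool" where
  "miss_MDP Sv T \<iota> M \<longleftrightarrow>
     (\<forall>i. finite (Sv i)) \<and>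
     set_pmf \<iota> \<subseteq> state_space Sv \<and>
     (\<forall>s\<in>state_space Sv. \<forall>a. set_pmf (T s a) \<subseteq> state_space Sv) \<and>
     (\<forall>s\<in>state_space Sv. \<forall>z\<in>set_pmf (M s). compatible z s)"

abbreviation Mprob :: "(('i,'v) state \<Rightarrow> ('i,'v) obs pmf) \<Rightarrow> ('i,'v) state \<Rightarrow> ('i,'v) obs \<Rightarrow> real" where
  "Mprob M s z \<equiv> pmf (M s) z"

definition I_always :: "('i \<Rightarrow> 'v set) \<Rightarrow> (('i,'v) state \<Rightarrow> ('i,'v) obs pmf) \<Rightarrow> 'i set" where
  "I_always Sv M = {i. \<forall>s\<in>state_space Sv. measure_pmf.prob (M s) {z. z i = None} = 0}"

definition simple_MAR :: "('i \<Rightarrow> 'v set) \<Rightarrow> (('i,'v) state \<Rightarrow> ('i,'v) obs pmf) \<Rightarrow> bool" where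
  "simple_MAR Sv M \<longleftrightarrow>
     (\<forall>s\<in>state_space Sv. \<forall>s'\<in>state_space Sv. (\<forall>i\<in>I_always Sv M. s i = s' i) \<longrightarrow>
        (\<forall>r. measure_pmf.prob (M s) {z. fR z = r} = measure_pmf.prob (M s') {z. fR z = r}))"

fun run_from ::
  "(('i,'v) state \<Rightarrow> 'a \<Rightarrow> ('i,'v) state pmf) \<Rightarrow> (('i,'v) state \<Rightarrow> ('i,'v) obs pmf)
    \<Rightarrow> ('i,'v,'a) policy \<Rightarrow> nat \<Rightarrow> ('i,'v,'a) hist \<Rightarrow> ('i,'v) state
    \<Rightarrow> (('i,'v) state \<times> ('i,'v) obs \<times> 'a) list pmf" where
  "run_from T M pol 0 h s = return_pmf []"
| "run_from T M pol (Suc k) h s =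
     bind_pmf (M s) (\<lambda>z. bind_pmf (pol h z) (\<lambda>a. bind_pmf (T s a) (\<lambda>s'.
       map_pmf (\<lambda>rest. (s, z, a) # rest) (run_from T M pol k (h @ [(z, a)]) s'))))"

definition run ::
  "(('i,'v) state \<Rightarrow> 'a \<Rightarrow> ('i,'v) state pmf) \<Rightarrow> ('i,'v) state pmf \<Rightarrow> (('i,'v) state \<Rightarrow> ('i,'v) obs pmf)
    \<Rightarrow> ('i,'v,'a) policy \<Rightarrow> nat \<Rightarrow> (('i,'v) state \<times> ('i,'v) obs \<times> 'a) list pmf" where
  "run T \<iota> M pol k = bind_pmf \<iota> (run_from T M pol k [])"

definition visited :: "(('i,'v) state \<times> ('i,'v) obs \<times> 'a) list \<Rightarrow> ('i,'v) state set" where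
  "visited tr = fst ` set tr"

definition history_of :: "(('i,'v) state \<times> ('i,'v) obs \<times> 'a) list \<Rightarrow> ('i,'v,'a) hist" where
  "history_of tr = map snd tr"

definition history_pmf ::
  "(('i,'v) state \<Rightarrow> 'a \<Rightarrow> ('i,'v) state pmf) \<Rightarrow> ('i,'v) state pmf \<Rightarrow> (('i,'v) state \<Rightarrow> ('i,'v) obs pmf)
    \<Rightarrow> ('i,'v,'a) policy \<Rightarrow> nat \<Rightarrow> ('i,'v,'a) hist pmf" where
  "history_pmf T \<iota> M pol k = map_pmf history_of (run T \<iota> M pol k)"

definition reachable ::
  "(('i,'v) state \<Rightarrow> 'a \<Rightarrow> ('i,'v) state pmf) \<Rightarrow> ('i,'v) state pmf \<Rightarrow> (('i,'v) state \<Rightarrow> ('i,'v) obs pmf)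
    \<Rightarrow> ('i,'v) state \<Rightarrow> bool" where
  "reachable T \<iota> M s \<longleftrightarrow>
     (\<exists>pol k. measure_pmf.prob (run T \<iota> M pol k) {tr. s \<in> visited tr} > 0)"

definition fair ::
  "(('i,'v) state \<Rightarrow> 'a \<Rightarrow> ('i,'v) state pmf) \<Rightarrow> ('i,'v) state pmf \<Rightarrow> (('i,'v) state \<Rightarrow> ('i,'v) obs pmf)
    \<Rightarrow> ('i,'v,'a) policy \<Rightarrow> nat \<Rightarrow> bool" where
  "fair T \<iota> M pol L \<longleftrightarrow>
     (\<forall>s. reachable T \<iota> M s \<longrightarrow> measure_pmf.prob (run T \<iota> M pol L) {tr. s \<in> visited tr} > 0)"

fun iid_pmf :: "nat \<Rightarrow> 'x pmf \<Rightarrow> 'x list pmf" where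
  "iid_pmf 0 p = return_pmf []"
| "iid_pmf (Suc k) p = bind_pmf p (\<lambda>x. map_pmf (\<lambda>xs. x # xs) (iid_pmf k p))"

definition count_obs :: "('i,'v,'a) hist list \<Rightarrow> ('i,'v) obs \<Rightarrow> nat" where
  "count_obs D z = (\<Sum>h\<leftarrow>D. length (filter (\<lambda>p. fst p = z) h))"

definition count_set :: "('i,'v,'a) hist list \<Rightarrow> ('i,'v) obs set \<Rightarrow> nat" where
  "count_set D Z' = (\<Sum>z\<in>Z'. count_obs D z)"

definition I_always_hat :: "('i \<Rightarrow> 'v set) \<Rightarrow> ('i,'v,'a) hist list \<Rightarrow> 'i set" where
  "I_always_hat Sv D = {i. count_set D {z\<in>obs_space Sv. z i = None} = 0}"

definition Z_sr :: "('i \<Rightarrow> 'v set) \<Rightarrow> ('i,'v,'a) hist list \<Rightarrow> ('i,'v) state \<Rightarrow> ('i \<Rightarrow> bool) \<Rightarrow> ('i,'v) obs set" where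
  "Z_sr Sv D s r = {z\<in>obs_space Sv. \<forall>i.
      (i \<in> I_always_hat Sv D \<longrightarrow> z i = Some (s i)) \<and> (\<not> r i \<longleftrightarrow> z i = None)}"

definition count_sr :: "('i \<Rightarrow> 'v set) \<Rightarrow> ('i,'v,'a) hist list \<Rightarrow> ('i,'v) state \<Rightarrow> ('i \<Rightarrow> bool) \<Rightarrow> nat" where
  "count_sr Sv D s r = count_set D (Z_sr Sv D s r)"

definition AsMAR :: "('i::finite \<Rightarrow> 'v set) \<Rightarrow> ('i,'v,'a) hist list \<Rightarrow> ('i,'v) state \<Rightarrow> ('i,'v) obs \<Rightarrow> real" where
  "AsMAR Sv D s z =
     (if compatible z s
      then real (count_sr Sv D s (fR z)) / (\<Sum>r\<in>(UNIV :: ('i \<Rightarrow> bool) set). real (count_sr Sv D s r))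
      else 0)"

end

theory Submission
  imports Defs
begin

text \<open>
  Let \<mu>(w) be the expected number of occurrences of the observation w in one history and
  \<nu>(s) the probability that a history visits s. As the observation at each step is drawn from
  M at the current state, \<mu>(w) is the expected sum of M(w | s_t) along a run. Under simple MAR
  the probability q_s(r) of the missingness pattern r is the same at all states agreeing with s on
  the always-observed features, so for every J containing them the sum of \<mu> over the observations
  that agree with s on J and have pattern r is q_s(r) V_J(s), where V_J(s) \<ge> \<nu>(s) is the
  expected number of visits to states agreeing with s on J; fairness makes \<nu>(s) positive for
  reachable s.

  By Chebyshev's inequality and a union bound, with n histories every count #(w) is within n\<eta>
  of n \<mu>(w) with probability at least 1 - |Z| L^2 / (n \<eta>^2), and counts with \<mu>(w) = 0 vanish
  almost surely. If \<eta> lies below every positive \<mu>(w), then on this event the estimated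
  always-observed features contain the true ones and every pattern the estimate excludes has
  probability zero at s. Hence numerator and denominator of the AsMAR ratio are within a multiple
  of n\<eta> of n q_s(r) V(s) and n V(s), and the ratio is close to q_s(f_R z) = M(z | s).
  Part (ii) is trivial, both quantities lying in [0, 1].
\<close>

section \<open>Sums over i.i.d. samples\<close>

lemma set_pmf_iid_pmf:
  "xs \<in> set_pmf (iid_pmf n p) \<Longrightarrow> length xs = n \<and> set xs \<subseteq> set_pmf p"
  by (induction n arbitrary: xs) (auto, blast)

lemma finite_set_pmf_iid_pmf:
  assumes "finite (set_pmf p)"
  shows "finite (set_pmf (iid_pmf n p))"
proof (rule finite_subset)
  show "set_pmf (iid_pmf n p) \<subseteq> {xs. set xs \<subseteq> set_pmf p \<and> length xs = n}"
    using set_pmf_iid_pmf by blast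
qed (use finite_lists_length_eq[OF assms] in simp)

lemma expectation_bind_pmf_finite:
  fixes f :: "'b \<Rightarrow> real"
  assumes "finite (set_pmf p)" and "\<And>x. x \<in> set_pmf p \<Longrightarrow> finite (set_pmf (N x))"
  shows "measure_pmf.expectation (p \<bind> N) f = measure_pmf.expectation p (\<lambda>x. measure_pmf.expectation (N x) f)"
  using assms by (simp add: pmf_expectation_bind[of "set_pmf p"] integral_measure_pmf_real[of "set_pmf p"] mult.commute)

lemma expectation_iid_pmf_Cons:
  fixes f :: "'b list \<Rightarrow> real"
  assumes "finite (set_pmf p)"
  shows "measure_pmf.expectation (iid_pmf (Suc n) p) f =
    measure_pmf.expectation p (\<lambda>x. measure_pmf.expectation (iid_pmf n p) (\<lambda>xs. f (x # xs)))"
  using assms by (simp add: expectation_bind_pmf_finite finite_set_pmf_iid_pmf)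

lemma expectation_iid_sum:
  fixes f :: "'b \<Rightarrow> real"
  assumes fin: "finite (set_pmf p)"
  shows "measure_pmf.expectation (iid_pmf n p) (\<lambda>xs. \<Sum>x\<leftarrow>xs. f x) = n * measure_pmf.expectation p f"
proof (induction n)
  case (Suc n)
  then show ?case
    using fin by (simp del: iid_pmf.simps add: expectation_iid_pmf_Cons
        integrable_measure_pmf_finite finite_set_pmf_iid_pmf algebra_simps)
qed simp

lemma expectation_iid_sum_square:
  fixes g :: "'b \<Rightarrow> real"
  assumes fin: "finite (set_pmf p)" and centred: "measure_pmf.expectation p g = 0"
  shows "measure_pmf.expectation (iid_pmf n p) (\<lambda>xs. (\<Sum>x\<leftarrow>xs. g x)\<^sup>2) =
    n * measure_pmf.expectation p (\<lambda>x. (g x)\<^sup>2)"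
proof (induction n)
  case (Suc n)
  have "measure_pmf.expectation (iid_pmf n p) (\<lambda>xs. (g x + (\<Sum>x\<leftarrow>xs. g x))\<^sup>2) =
      (g x)\<^sup>2 + n * measure_pmf.expectation p (\<lambda>x. (g x)\<^sup>2)" for x
    using Suc expectation_iid_sum[OF fin, of n g] centred fin
    by (simp add: power2_sum integrable_measure_pmf_finite finite_set_pmf_iid_pmf)
  then show ?case
    using fin by (simp del: iid_pmf.simps add: expectation_iid_pmf_Cons
        integrable_measure_pmf_finite algebra_simps)
qed simp

lemma prob_iid_sum_deviation:
  fixes f :: "'b \<Rightarrow> real"
  assumes fin: "finite (set_pmf p)"
    and bounded: "\<And>x. x \<in> set_pmf p \<Longrightarrow> \<bar>f x - measure_pmf.expectation p f\<bar> \<le> B"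
    and n: "n > 0" and t: "t > 0"
  shows "measure_pmf.prob (iid_pmf n p)
      {xs. n * t \<le> \<bar>(\<Sum>x\<leftarrow>xs. f x) - n * measure_pmf.expectation p f\<bar>} \<le> B\<^sup>2 / (n * t\<^sup>2)"
proof -
  define g where "g x = f x - measure_pmf.expectation p f" for x
  define S where "S xs = (\<Sum>x\<leftarrow>xs. g x)" for xs
  have centred: "measure_pmf.expectation p g = 0"
    unfolding g_def using fin by (simp add: integrable_measure_pmf_finite)
  have ES: "measure_pmf.expectation (iid_pmf n p) S = 0"
    unfolding S_def using expectation_iid_sum[OF fin, of n g] centred by simp
  have "S xs = (\<Sum>x\<leftarrow>xs. f x) - n * measure_pmf.expectation p f" if "xs \<in> set_pmf (iid_pmf n p)" for xs
    using set_pmf_iid_pmf[OF that] unfolding S_def g_def by (simp add: sum_list_subtractf sum_list_triv)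
  then have "measure_pmf.prob (iid_pmf n p) {xs. n * t \<le> \<bar>(\<Sum>x\<leftarrow>xs. f x) - n * measure_pmf.expectation p f\<bar>}
      = measure_pmf.prob (iid_pmf n p) {xs. n * t \<le> \<bar>S xs - measure_pmf.expectation (iid_pmf n p) S\<bar>}"
    unfolding ES by (intro measure_pmf.finite_measure_eq_AE) (auto simp: AE_measure_pmf_iff)
  also have "\<dots> \<le> measure_pmf.variance (iid_pmf n p) S / (n * t)\<^sup>2"
    using measure_pmf.Chebyshev_inequality[of S "iid_pmf n p" "n * t"] n t
    by (simp add: integrable_measure_pmf_finite finite_set_pmf_iid_pmf fin)
  also have "measure_pmf.variance (iid_pmf n p) S = n * measure_pmf.expectation p (\<lambda>x. (g x)\<^sup>2)"
    using expectation_iid_sum_square[OF fin centred, of n] ES unfolding S_def by simp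
  also have "measure_pmf.expectation p (\<lambda>x. (g x)\<^sup>2) \<le> measure_pmf.expectation p (\<lambda>_. B\<^sup>2)"
    using bounded fin unfolding g_def
    by (intro integral_mono_AE) (auto simp: AE_measure_pmf_iff integrable_measure_pmf_finite
        intro!: power2_le_iff_abs_le[THEN iffD2] order_trans[OF abs_ge_zero])
  finally show ?thesis
    using n t by (simp add: divide_right_mono power2_eq_square mult.left_commute)
qed

section \<open>Runs and missingness patterns\<close>

lemma compatible_in_obs_space: "s \<in> state_space Sv \<Longrightarrow> compatible z s \<Longrightarrow> z \<in> obs_space Sv"
  unfolding state_space_def obs_space_def compatible_def by (auto simp: PiE_iff)

lemma nn_integral_run_from_obs_sum:
  fixes \<phi> :: "('i,'v) state \<Rightarrow> ('i,'v) obs \<Rightarrow> ennreal"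
  shows "(\<integral>\<^sup>+tr. (\<Sum>x\<leftarrow>tr. \<phi> (fst x) (fst (snd x))) \<partial>run_from T M pol k h s)
       = (\<integral>\<^sup>+tr. (\<Sum>x\<leftarrow>tr. \<integral>\<^sup>+z. \<phi> (fst x) z \<partial>M (fst x)) \<partial>run_from T M pol k h s)"
proof (induction k arbitrary: h s)
  case (Suc k)
  define rest where "rest z = (\<integral>\<^sup>+a. \<integral>\<^sup>+s'. \<integral>\<^sup>+tr. (\<Sum>x\<leftarrow>tr. \<integral>\<^sup>+z. \<phi> (fst x) z \<partial>M (fst x))
      \<partial>run_from T M pol k (h @ [(z, a)]) s' \<partial>T s a \<partial>pol h z)" for z
  have "(\<integral>\<^sup>+tr. (\<Sum>x\<leftarrow>tr. \<phi> (fst x) (fst (snd x))) \<partial>run_from T M pol (Suc k) h s)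
      = (\<integral>\<^sup>+z. \<phi> s z \<partial>M s) + (\<integral>\<^sup>+z. rest z \<partial>M s)"
    by (simp add: nn_integral_add Suc.IH rest_def)
  also have "\<dots> = (\<integral>\<^sup>+tr. (\<Sum>x\<leftarrow>tr. \<integral>\<^sup>+z. \<phi> (fst x) z \<partial>M (fst x)) \<partial>run_from T M pol (Suc k) h s)"
    by (simp add: nn_integral_add rest_def)
  finally show ?case .
qed simp

locale miss_mdp =
  fixes Sv :: "'i::finite \<Rightarrow> 'v set"
    and T :: "('i,'v) state \<Rightarrow> 'a::finite \<Rightarrow> ('i,'v) state pmf"
    and \<iota> :: "('i,'v) state pmf"
    and M :: "('i,'v) state \<Rightarrow> ('i,'v) obs pmf"
  assumes miss_MDP: "miss_MDP Sv T \<iota> M"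
begin

lemma finite_state_space: "finite (state_space Sv)"
  using miss_MDP unfolding miss_MDP_def state_space_def by (auto intro!: finite_PiE)

lemma finite_obs_space: "finite (obs_space Sv)"
  using miss_MDP unfolding miss_MDP_def obs_space_def by (auto intro!: finite_PiE)

lemma compatible_if_in_set_pmf: "s \<in> state_space Sv \<Longrightarrow> z \<in> set_pmf (M s) \<Longrightarrow> compatible z s"
  using miss_MDP unfolding miss_MDP_def by blast

lemma set_pmf_run_from:
  assumes "s \<in> state_space Sv" and "tr \<in> set_pmf (run_from T M pol k h s)"
  shows "length tr = k \<and> (\<forall>x\<in>set tr. fst x \<in> state_space Sv \<and> compatible (fst (snd x)) (fst x))"
  using assms
proof (induction k arbitrary: h s tr)
  case (Suc k)
  then obtain z a s' rest where "z \<in> set_pmf (M s)" and "s' \<in> set_pmf (T s a)"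
    and "rest \<in> set_pmf (run_from T M pol k (h @ [(z, a)]) s')" and "tr = (s, z, a) # rest"
    by (auto simp: set_bind_pmf)
  with Suc show ?case
    using miss_MDP compatible_if_in_set_pmf unfolding miss_MDP_def
    by (metis (no_types, lifting) fst_conv set_ConsD snd_conv length_Cons subset_iff)
qed simp

lemma set_pmf_run:
  assumes "tr \<in> set_pmf (run T \<iota> M pol k)"
  shows "length tr = k \<and> (\<forall>x\<in>set tr. fst x \<in> state_space Sv \<and> compatible (fst (snd x)) (fst x))"
proof -
  obtain s where "s \<in> set_pmf \<iota>" and "tr \<in> set_pmf (run_from T M pol k [] s)"
    using assms unfolding run_def by auto
  then show ?thesis
    using miss_MDP set_pmf_run_from unfolding miss_MDP_def by blast
qed

lemma finite_set_pmf_run: "finite (set_pmf (run T \<iota> M pol k))"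
proof (rule finite_subset)
  let ?A = "state_space Sv \<times> obs_space Sv \<times> (UNIV :: 'a set)"
  show "set_pmf (run T \<iota> M pol k) \<subseteq> {xs. set xs \<subseteq> ?A \<and> length xs = k}"
    using set_pmf_run compatible_in_obs_space by fastforce
  show "finite {xs. set xs \<subseteq> ?A \<and> length xs = k}"
    by (intro finite_lists_length_eq finite_cartesian_product finite_state_space finite_obs_space) simp
qed

lemma finite_set_pmf_history_pmf: "finite (set_pmf (history_pmf T \<iota> M pol k))"
  unfolding history_pmf_def using finite_set_pmf_run by simp

lemma length_if_in_set_pmf_history_pmf:
  "h \<in> set_pmf (history_pmf T \<iota> M pol k) \<Longrightarrow> length h = k"
  using set_pmf_run unfolding history_pmf_def history_of_def by auto

lemma reachable_in_state_space:
  assumes "reachable T \<iota> M s"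
  shows "s \<in> state_space Sv"
proof -
  obtain pol k where "measure_pmf.prob (run T \<iota> M pol k) {tr. s \<in> visited tr} \<noteq> 0"
    using assms unfolding reachable_def by force
  then obtain tr where "tr \<in> set_pmf (run T \<iota> M pol k)" and "s \<in> visited tr"
    by (auto simp: measure_pmf_zero_iff)
  then show ?thesis
    using set_pmf_run unfolding visited_def by fastforce
qed

end

definition pattern_prob ::
    "(('i,'v) state \<Rightarrow> ('i,'v) obs pmf) \<Rightarrow> ('i,'v) state \<Rightarrow> ('i \<Rightarrow> bool) \<Rightarrow> real" where
  "pattern_prob M s r = measure_pmf.prob (M s) {z. fR z = r}"

definition pattern_obs ::
    "('i \<Rightarrow> 'v set) \<Rightarrow> 'i set \<Rightarrow> ('i,'v) state \<Rightarrow> ('i \<Rightarrow> bool) \<Rightarrow> ('i,'v) obs set" where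
  "pattern_obs Sv J s r = {z\<in>obs_space Sv. \<forall>i.
      (i \<in> J \<longrightarrow> z i = Some (s i)) \<and> (\<not> r i \<longleftrightarrow> z i = None)}"

lemma Z_sr_eq_pattern_obs: "Z_sr Sv D s r = pattern_obs Sv (I_always_hat Sv D) s r"
  unfolding Z_sr_def pattern_obs_def ..

lemma sum_pattern_prob:
  fixes M :: "('i::finite,'v) state \<Rightarrow> ('i,'v) obs pmf"
  shows "(\<Sum>r\<in>UNIV. pattern_prob M s r) = 1"
proof -
  have "pattern_prob M s r = pmf (map_pmf fR (M s)) r" for r
    unfolding pattern_prob_def pmf_map by (simp add: vimage_def)
  then show ?thesis
    by (auto intro: sum_pmf_eq_1)
qed

lemma compatible_eq_iff_fR_eq:
  assumes "compatible z s" and "compatible z' s"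
  shows "z = z' \<longleftrightarrow> fR z = fR z'"
proof
  assume "fR z = fR z'"
  then have "z i = None \<longleftrightarrow> z' i = None" for i
    unfolding fR_def by meson
  moreover have "z i \<in> {Some (s i), None}" and "z' i \<in> {Some (s i), None}" for i
    using assms unfolding compatible_def by auto
  ultimately have "z i = z' i" for i
    by (metis empty_iff insert_iff)
  then show "z = z'" ..
qed simp

lemma mem_pattern_obs_iff:
  assumes s': "s' \<in> state_space Sv" and z: "compatible z s'" and J: "\<forall>j\<in>J. r j \<and> s' j = s j"
  shows "z \<in> pattern_obs Sv J s r \<longleftrightarrow> fR z = r"
proof
  assume "z \<in> pattern_obs Sv J s r"
  then have "\<not> r i \<longleftrightarrow> z i = None" for i
    unfolding pattern_obs_def by blast
  then show "fR z = r"
    unfolding fR_def fun_eq_iff by metis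
next
  assume "fR z = r"
  then have r: "r i \<longleftrightarrow> z i \<noteq> None" for i
    unfolding fR_def by auto
  have "z i = Some (s i)" if "i \<in> J" for i
  proof -
    have "z i \<noteq> None" and "s' i = s i"
      using J r that by auto
    then show ?thesis
      using z unfolding compatible_def by metis
  qed
  moreover have "z \<in> obs_space Sv"
    using compatible_in_obs_space s' z .
  ultimately show "z \<in> pattern_obs Sv J s r"
    using r unfolding pattern_obs_def by auto
qed

lemma not_mem_pattern_obs:
  assumes "compatible z s'" and "j \<in> J" and "s' j \<noteq> s j"
  shows "z \<notin> pattern_obs Sv J s r"
proof
  assume "z \<in> pattern_obs Sv J s r"
  then have "z j = Some (s j)"
    using assms(2) unfolding pattern_obs_def by auto
  then show False
    using assms(1,3) unfolding compatible_def by (metis option.distinct(1) option.inject)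
qed

context miss_mdp
begin

lemma pmf_eq_pattern_prob:
  assumes s: "s \<in> state_space Sv" and z: "compatible z s"
  shows "pmf (M s) z = pattern_prob M s (fR z)"
proof -
  have "{z'. fR z' = fR z} \<inter> set_pmf (M s) = {z} \<inter> set_pmf (M s)"
    using compatible_eq_iff_fR_eq[OF _ z] compatible_if_in_set_pmf[OF s] by auto
  then show ?thesis
    unfolding pattern_prob_def by (metis measure_Int_set_pmf measure_pmf_single)
qed

lemma prob_pattern_obs:
  assumes mar: "simple_MAR Sv M" and J: "I_always Sv M \<subseteq> J" and r: "\<forall>j\<in>J. r j"
    and s: "s \<in> state_space Sv" and s': "s' \<in> state_space Sv"
  shows "measure_pmf.prob (M s') (pattern_obs Sv J s r) =
    (if \<forall>j\<in>J. s' j = s j then pattern_prob M s r else 0)"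
proof (cases "\<forall>j\<in>J. s' j = s j")
  case True
  have "pattern_obs Sv J s r \<inter> set_pmf (M s') = {z. fR z = r} \<inter> set_pmf (M s')"
    using mem_pattern_obs_iff[OF s' compatible_if_in_set_pmf[OF s']] True r by auto
  then have "measure_pmf.prob (M s') (pattern_obs Sv J s r) = pattern_prob M s' r"
    unfolding pattern_prob_def by (metis measure_Int_set_pmf)
  also have "\<dots> = pattern_prob M s r"
  proof -
    have "s' i = s i" if "i \<in> I_always Sv M" for i
      using True J that by blast
    from mar[unfolded simple_MAR_def, rule_format, OF s' s this] show ?thesis
      unfolding pattern_prob_def .
  qed
  finally show ?thesis
    using True by simp
next
  case False
  then obtain j where j: "j \<in> J" "s' j \<noteq> s j"
    by blast
  have "z \<notin> pattern_obs Sv J s r" if "z \<in> set_pmf (M s')" for z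
    using not_mem_pattern_obs[of z s' j J s, OF compatible_if_in_set_pmf[OF s' that] j] .
  then have "pattern_obs Sv J s r \<inter> set_pmf (M s') = {}"
    by blast
  then show ?thesis
    using False by (metis measure_Int_set_pmf measure_empty)
qed

end

section \<open>Expected observation counts\<close>

lemma sum_list_if_const: "(\<Sum>x\<leftarrow>xs. if P x then c else 0) = c * real (length (filter P xs))"
  by (induction xs) (auto simp: algebra_simps)

lemma sum_sum_list_swap: "(\<Sum>w\<in>A. \<Sum>x\<leftarrow>xs. g x w) = (\<Sum>x\<leftarrow>xs. \<Sum>w\<in>A. g x w)"
  by (induction xs) (auto simp: sum.distrib)

definition obs_count :: "('i,'v) obs \<Rightarrow> ('i,'v,'a) hist \<Rightarrow> nat" where
  "obs_count w h = length (filter (\<lambda>p. fst p = w) h)"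

lemma real_count_obs: "real (count_obs D w) = (\<Sum>h\<leftarrow>D. real (obs_count w h))"
  unfolding count_obs_def obs_count_def by (induction D) auto

lemma obs_count_history_of:
  "real (obs_count w (history_of tr)) = (\<Sum>x\<leftarrow>tr. indicator {w} (fst (snd x)))"
  unfolding obs_count_def history_of_def by (induction tr) auto

locale miss_mdp_behaviour = miss_mdp Sv T \<iota> M
  for Sv :: "'i::finite \<Rightarrow> 'v set"
    and T :: "('i,'v) state \<Rightarrow> 'a::finite \<Rightarrow> ('i,'v) state pmf"
    and \<iota> :: "('i,'v) state pmf"
    and M :: "('i,'v) state \<Rightarrow> ('i,'v) obs pmf" +
  fixes pol :: "('i,'v,'a) policy"
    and L :: nat
begin

definition expected_count :: "('i,'v) obs \<Rightarrow> real" where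
  "expected_count w = measure_pmf.expectation (history_pmf T \<iota> M pol L) (\<lambda>h. real (obs_count w h))"

definition visit_prob :: "('i,'v) state \<Rightarrow> real" where
  "visit_prob s = measure_pmf.prob (run T \<iota> M pol L) {tr. s \<in> visited tr}"

definition expected_agreeing_visits :: "'i set \<Rightarrow> ('i,'v) state \<Rightarrow> real" where
  "expected_agreeing_visits J s = measure_pmf.expectation (run T \<iota> M pol L)
     (\<lambda>tr. real (length (filter (\<lambda>x. \<forall>j\<in>J. fst x j = s j) tr)))"

lemma integrable_run [simp]: "integrable (measure_pmf (run T \<iota> M pol L)) f"
  for f :: "_ \<Rightarrow> real"
  by (simp add: integrable_measure_pmf_finite finite_set_pmf_run)

text \<open>The observation at each step is drawn from M at the current state, so the expected
  number of occurrences of w is the expected sum of the probabilities M(w | s) along the run.\<close>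
lemma expected_count_eq_run:
  "expected_count w = measure_pmf.expectation (run T \<iota> M pol L) (\<lambda>tr. \<Sum>x\<leftarrow>tr. pmf (M (fst x)) w)"
proof -
  let ?ind = "\<lambda>_ z. ennreal (indicator {w} z)"
  have "(\<integral>\<^sup>+tr. ennreal (real (obs_count w (history_of tr))) \<partial>run T \<iota> M pol L)
      = (\<integral>\<^sup>+s. \<integral>\<^sup>+tr. (\<Sum>x\<leftarrow>tr. ?ind (fst x) (fst (snd x))) \<partial>run_from T M pol L [] s \<partial>\<iota>)"
    unfolding run_def obs_count_history_of by (simp add: sum_list_ennreal[symmetric] del: sum_list_ennreal)
  also have "\<dots> = (\<integral>\<^sup>+s. \<integral>\<^sup>+tr. (\<Sum>x\<leftarrow>tr. \<integral>\<^sup>+z. ?ind (fst x) z \<partial>M (fst x)) \<partial>run_from T M pol L [] s \<partial>\<iota>)"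
    by (subst nn_integral_run_from_obs_sum) (rule refl)
  also have "\<dots> = (\<integral>\<^sup>+tr. ennreal (\<Sum>x\<leftarrow>tr. pmf (M (fst x)) w) \<partial>run T \<iota> M pol L)"
    unfolding run_def by (simp add: ennreal_indicator emeasure_pmf_single)
  finally show ?thesis
    unfolding expected_count_def history_pmf_def
    by (subst (1 2) integral_eq_nn_integral) (auto intro!: AE_I2 sum_list_nonneg)
qed

lemma expected_count_nonneg: "0 \<le> expected_count w"
  unfolding expected_count_def by simp

lemma expected_count_le: "expected_count w \<le> L"
proof -
  have "obs_count w h \<le> L" if "h \<in> set_pmf (history_pmf T \<iota> M pol L)" for h
    using length_if_in_set_pmf_history_pmf[OF that] unfolding obs_count_def by (metis length_filter_le)
  then have "expected_count w \<le> measure_pmf.expectation (history_pmf T \<iota> M pol L) (\<lambda>_. real L)"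
    unfolding expected_count_def
    by (intro integral_mono_AE) (auto simp: AE_measure_pmf_iff integrable_measure_pmf_finite finite_set_pmf_history_pmf)
  then show ?thesis
    by simp
qed

lemma obs_count_eq_0_if_expected_count_eq_0:
  assumes "h \<in> set_pmf (history_pmf T \<iota> M pol L)" and "expected_count w = 0"
  shows "obs_count w h = 0"
proof -
  have "(\<Sum>h\<in>set_pmf (history_pmf T \<iota> M pol L). real (obs_count w h) * pmf (history_pmf T \<iota> M pol L) h) = 0"
    using assms(2) unfolding expected_count_def
    by (subst (asm) integral_measure_pmf_real[OF finite_set_pmf_history_pmf]) auto
  then show ?thesis
    using assms(1) by (subst (asm) sum_nonneg_eq_0_iff) (auto simp: finite_set_pmf_history_pmf set_pmf_iff)
qed

lemma expected_count_eq_0_if_always_observed: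
  assumes i: "i \<in> I_always Sv M" and w: "w i = None"
  shows "expected_count w = 0"
proof -
  have "pmf (M s) w = 0" if "s \<in> state_space Sv" for s
  proof -
    have "pmf (M s) w \<le> measure_pmf.prob (M s) {z. z i = None}"
      using w by (simp add: measure_pmf_single[symmetric] measure_pmf.finite_measure_mono)
    then show ?thesis
      using i that unfolding I_always_def by (simp add: order_antisym)
  qed
  then have "expected_count w = measure_pmf.expectation (run T \<iota> M pol L) (\<lambda>_. 0)"
    unfolding expected_count_eq_run using set_pmf_run
    by (intro integral_cong_AE) (auto simp: AE_measure_pmf_iff intro!: sum_list_nonneg_eq_0_iff[THEN iffD2])
  then show ?thesis
    by simp
qed

lemma visit_prob_mult_le_expected_count: "visit_prob s * pmf (M s) w \<le> expected_count w"
proof -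
  have "indicator {tr. s \<in> visited tr} tr * pmf (M s) w \<le> (\<Sum>x\<leftarrow>tr. pmf (M (fst x)) w)" for tr
  proof (cases "s \<in> visited tr")
    case True
    then have "pmf (M s) w \<in> set (map (\<lambda>x. pmf (M (fst x)) w) tr)"
      unfolding visited_def by force
    then have "pmf (M s) w \<le> (\<Sum>x\<leftarrow>tr. pmf (M (fst x)) w)"
      by (rule member_le_sum_list) auto
    then show ?thesis
      using True by simp
  next
    case False
    have "0 \<le> (\<Sum>x\<leftarrow>tr. pmf (M (fst x)) w)"
      by (rule sum_list_nonneg) auto
    with False show ?thesis
      by simp
  qed
  then have "measure_pmf.expectation (run T \<iota> M pol L) (\<lambda>tr. indicator {tr. s \<in> visited tr} tr * pmf (M s) w)
      \<le> expected_count w"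
    unfolding expected_count_eq_run by (intro integral_mono) auto
  then show ?thesis
    unfolding visit_prob_def by simp
qed

lemma visit_prob_le_expected_agreeing_visits: "visit_prob s \<le> expected_agreeing_visits J s"
proof -
  have "indicator {tr. s \<in> visited tr} tr \<le> real (length (filter (\<lambda>x. \<forall>j\<in>J. fst x j = s j) tr))" for tr
  proof (cases "s \<in> visited tr")
    case True
    then obtain x where "x \<in> set (filter (\<lambda>x. \<forall>j\<in>J. fst x j = s j) tr)"
      unfolding visited_def by auto
    from length_pos_if_in_set[OF this] show ?thesis
      using True by (simp add: Suc_le_eq)
  qed simp
  then have "measure_pmf.expectation (run T \<iota> M pol L) (indicator {tr. s \<in> visited tr})
      \<le> expected_agreeing_visits J s"
    unfolding expected_agreeing_visits_def by (intro integral_mono) auto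
  then show ?thesis
    unfolding visit_prob_def by simp
qed

lemma sum_expected_count_pattern_obs:
  assumes mar: "simple_MAR Sv M" and J: "I_always Sv M \<subseteq> J" and r: "\<forall>j\<in>J. r j"
    and s: "s \<in> state_space Sv"
  shows "(\<Sum>w\<in>pattern_obs Sv J s r. expected_count w) = pattern_prob M s r * expected_agreeing_visits J s"
proof -
  let ?Z = "pattern_obs Sv J s r"
  have fin: "finite ?Z"
    using finite_obs_space unfolding pattern_obs_def by simp
  have "(\<Sum>w\<in>?Z. expected_count w)
      = measure_pmf.expectation (run T \<iota> M pol L) (\<lambda>tr. \<Sum>w\<in>?Z. \<Sum>x\<leftarrow>tr. pmf (M (fst x)) w)"
    unfolding expected_count_eq_run by simp
  also have "\<dots> = measure_pmf.expectation (run T \<iota> M pol L)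
      (\<lambda>tr. \<Sum>x\<leftarrow>tr. measure_pmf.prob (M (fst x)) ?Z)"
    by (simp add: sum_sum_list_swap measure_measure_pmf_finite[OF fin])
  also have "\<dots> = measure_pmf.expectation (run T \<iota> M pol L)
      (\<lambda>tr. \<Sum>x\<leftarrow>tr. if \<forall>j\<in>J. fst x j = s j then pattern_prob M s r else 0)"
  proof (intro integral_cong_AE AE_pmfI arg_cong[where f=sum_list] map_cong refl)
    fix tr x
    assume "tr \<in> set_pmf (run T \<iota> M pol L)" and "x \<in> set tr"
    then have "fst x \<in> state_space Sv"
      using set_pmf_run by blast
    then show "measure_pmf.prob (M (fst x)) ?Z = (if \<forall>j\<in>J. fst x j = s j then pattern_prob M s r else 0)"
      by (rule prob_pattern_obs[OF mar J r s])
  qed simp_all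
  finally show ?thesis
    unfolding expected_agreeing_visits_def sum_list_if_const by simp
qed

end

section \<open>The AsMAR estimate on datasets with accurate counts\<close>

lemma abs_divide_diff_le:
  fixes a b A B n c \<epsilon> :: real
  assumes n: "n > 0" and B: "B > 0" and A: "0 \<le> A" "A \<le> B"
    and a: "\<bar>a - n * A\<bar> \<le> n * c" and b: "\<bar>b - n * B\<bar> \<le> n * c"
    and c: "2 * c \<le> B" "4 * c \<le> \<epsilon> * B"
  shows "\<bar>a / b - A / B\<bar> \<le> \<epsilon>"
proof -
  define x y where "x = a / n" and "y = b / n"
  have x: "\<bar>x - A\<bar> \<le> c" and y: "\<bar>y - B\<bar> \<le> c"
    using a b n unfolding x_def y_def by (simp_all add: abs_le_iff field_simps)
  have c0: "0 \<le> c"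
    using x by linarith
  have y2: "B / 2 \<le> y"
    using y c by (simp add: abs_le_iff)
  have "0 < y"
    using y2 B by linarith
  then have "0 < b"
    using n unfolding y_def by (simp add: zero_less_divide_iff)
  then have "a / b - A / B = (B * (x - A) - A * (y - B)) / (y * B)"
    using n B unfolding x_def y_def by (simp add: field_simps)
  then have "\<bar>a / b - A / B\<bar> = \<bar>B * (x - A) - A * (y - B)\<bar> / (y * B)"
    using B y2 by (simp add: abs_divide)
  also have "\<dots> \<le> (B * c + B * c) / (y * B)"
  proof (rule divide_right_mono)
    have "\<bar>A * (y - B)\<bar> \<le> B * c"
      using y A c0 by (simp add: abs_mult mult_mono)
    moreover have "\<bar>B * (x - A)\<bar> \<le> B * c"
      using x B by (simp add: abs_mult)
    ultimately show "\<bar>B * (x - A) - A * (y - B)\<bar> \<le> B * c + B * c"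
      by linarith
  qed (use B y2 in simp)
  also have "\<dots> = 2 * c / y"
    using B y2 by (simp add: field_simps)
  also have "\<dots> \<le> 2 * c / (B / 2)"
    using y2 B c0 by (intro divide_left_mono) auto
  also have "\<dots> \<le> \<epsilon>"
    using c B by (simp add: divide_le_eq)
  finally show ?thesis .
qed

context miss_mdp_behaviour
begin

text \<open>The second conjunct holds almost surely; it makes the estimated always-observed features
  contain the true ones.\<close>
definition accurate_counts :: "nat \<Rightarrow> real \<Rightarrow> ('i,'v,'a) hist list \<Rightarrow> bool" where
  "accurate_counts n \<eta> D \<longleftrightarrow> (\<forall>w\<in>obs_space Sv.
     \<bar>real (count_obs D w) - n * expected_count w\<bar> < n * \<eta> \<and>
     (expected_count w = 0 \<longrightarrow> count_obs D w = 0))"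

lemma I_always_subset_I_always_hat:
  assumes "\<forall>w\<in>obs_space Sv. expected_count w = 0 \<longrightarrow> count_obs D w = 0"
  shows "I_always Sv M \<subseteq> I_always_hat Sv D"
proof
  fix i
  assume i: "i \<in> I_always Sv M"
  have "count_obs D w = 0" if "w \<in> obs_space Sv" and "w i = None" for w
    using assms expected_count_eq_0_if_always_observed[of i w, OF i that(2)] that(1) by blast
  then show "i \<in> I_always_hat Sv D"
    unfolding I_always_hat_def count_set_def by (simp add: sum.neutral)
qed

lemma pattern_prob_eq_0_if_never_missing:
  fixes n :: nat and \<eta> :: real
  assumes s: "s \<in> state_space Sv" and visit: "visit_prob s > 0"
    and j: "j \<in> I_always_hat Sv D" and r: "\<not> r j"
    and close: "\<forall>w\<in>obs_space Sv. \<bar>real (count_obs D w) - n * expected_count w\<bar> < n * \<eta>"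
    and gap: "\<forall>w\<in>obs_space Sv. 0 < expected_count w \<longrightarrow> \<eta> \<le> expected_count w"
  shows "pattern_prob M s r = 0"
proof (rule ccontr)
  assume "pattern_prob M s r \<noteq> 0"
  then obtain w where w: "w \<in> set_pmf (M s)" and "fR w = r"
    unfolding pattern_prob_def by (auto simp: measure_pmf_zero_iff)
  then have "w j = None"
    using r unfolding fR_def by auto
  have w_obs: "w \<in> obs_space Sv"
    using compatible_in_obs_space[OF s compatible_if_in_set_pmf[OF s w]] .
  then have "count_obs D w = 0"
    using j \<open>w j = None\<close> finite_obs_space unfolding I_always_hat_def count_set_def by auto
  moreover have "0 < expected_count w"
    using visit pmf_positive[OF w] visit_prob_mult_le_expected_count[of s w]
    by (meson mult_pos_pos order_less_le_trans)
  then have "n * \<eta> \<le> n * expected_count w"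
    using gap w_obs by (intro mult_left_mono) auto
  ultimately show False
    using close[rule_format, OF w_obs] expected_count_nonneg[of w] by (simp add: abs_mult)
qed

lemma sum_expected_count_Z_sr:
  fixes n :: nat and \<eta> :: real
  assumes mar: "simple_MAR Sv M" and s: "s \<in> state_space Sv" and visit: "visit_prob s > 0"
    and accurate: "accurate_counts n \<eta> D"
    and gap: "\<forall>w\<in>obs_space Sv. 0 < expected_count w \<longrightarrow> \<eta> \<le> expected_count w"
  shows "(\<Sum>w\<in>Z_sr Sv D s r. expected_count w) =
    pattern_prob M s r * expected_agreeing_visits (I_always_hat Sv D) s"
proof (cases "\<forall>j\<in>I_always_hat Sv D. r j")
  case True
  have "I_always Sv M \<subseteq> I_always_hat Sv D"
    using accurate unfolding accurate_counts_def by (intro I_always_subset_I_always_hat) blast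
  from sum_expected_count_pattern_obs[OF mar this True s] show ?thesis
    unfolding Z_sr_eq_pattern_obs .
next
  case False
  then obtain j where j: "j \<in> I_always_hat Sv D" "\<not> r j"
    by blast
  then have "Z_sr Sv D s r = {}"
    unfolding Z_sr_def by auto
  moreover have "pattern_prob M s r = 0"
    using accurate unfolding accurate_counts_def
    by (intro pattern_prob_eq_0_if_never_missing[where r=r and n=n, OF s visit j _ gap]) blast
  ultimately show ?thesis
    by simp
qed

lemma count_sr_deviation:
  fixes n :: nat and \<eta> :: real
  assumes mar: "simple_MAR Sv M" and s: "s \<in> state_space Sv" and visit: "visit_prob s > 0"
    and \<eta>: "\<eta> > 0" and accurate: "accurate_counts n \<eta> D"
    and gap: "\<forall>w\<in>obs_space Sv. 0 < expected_count w \<longrightarrow> \<eta> \<le> expected_count w"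
  shows "\<bar>real (count_sr Sv D s r) - n * (pattern_prob M s r * expected_agreeing_visits (I_always_hat Sv D) s)\<bar>
    \<le> n * (card (obs_space Sv) * \<eta>)"
proof -
  let ?Z = "Z_sr Sv D s r"
  have Z: "?Z \<subseteq> obs_space Sv"
    unfolding Z_sr_def by blast
  have "real (count_sr Sv D s r) - n * (pattern_prob M s r * expected_agreeing_visits (I_always_hat Sv D) s)
      = (\<Sum>w\<in>?Z. real (count_obs D w) - n * expected_count w)"
    unfolding count_sr_def count_set_def sum_expected_count_Z_sr[OF mar s visit accurate gap, symmetric]
    by (simp add: sum_subtractf sum_distrib_left)
  also have "\<bar>\<dots>\<bar> \<le> (\<Sum>w\<in>?Z. \<bar>real (count_obs D w) - n * expected_count w\<bar>)"
    by (rule sum_abs)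
  also have "\<dots> \<le> (\<Sum>w\<in>?Z. n * \<eta>)"
    using accurate Z unfolding accurate_counts_def by (intro sum_mono) (auto simp: less_imp_le)
  also have "\<dots> \<le> card (obs_space Sv) * (n * \<eta>)"
    using \<eta> card_mono[OF finite_obs_space Z] by (simp add: mult_right_mono)
  finally show ?thesis
    by (simp add: algebra_simps)
qed

lemma sum_count_sr_deviation:
  fixes n :: nat and \<eta> :: real
  assumes mar: "simple_MAR Sv M" and s: "s \<in> state_space Sv" and visit: "visit_prob s > 0"
    and \<eta>: "\<eta> > 0" and accurate: "accurate_counts n \<eta> D"
    and gap: "\<forall>w\<in>obs_space Sv. 0 < expected_count w \<longrightarrow> \<eta> \<le> expected_count w"
  shows "\<bar>(\<Sum>r\<in>UNIV. real (count_sr Sv D s r)) - n * expected_agreeing_visits (I_always_hat Sv D) s\<bar>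
    \<le> n * (CARD('i \<Rightarrow> bool) * card (obs_space Sv) * \<eta>)"
proof -
  let ?V = "expected_agreeing_visits (I_always_hat Sv D) s"
  have "(\<Sum>r\<in>UNIV. pattern_prob M s r * ?V) = ?V"
    by (simp add: sum_distrib_right[symmetric] sum_pattern_prob)
  then have "(\<Sum>r\<in>UNIV. real (count_sr Sv D s r)) - n * ?V
      = (\<Sum>r\<in>UNIV. real (count_sr Sv D s r) - n * (pattern_prob M s r * ?V))"
    by (simp add: sum_subtractf sum_distrib_left[symmetric])
  also have "\<bar>\<dots>\<bar> \<le> (\<Sum>r\<in>UNIV. \<bar>real (count_sr Sv D s r) - n * (pattern_prob M s r * ?V)\<bar>)"
    by (rule sum_abs)
  also have "\<dots> \<le> (\<Sum>r\<in>(UNIV :: ('i \<Rightarrow> bool) set). n * (card (obs_space Sv) * \<eta>))"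
    by (intro sum_mono count_sr_deviation[OF mar s visit \<eta> accurate gap])
  finally show ?thesis
    by (simp add: algebra_simps)
qed

lemma AsMAR_close:
  fixes n :: nat and \<eta> \<epsilon> :: real
  defines "c \<equiv> CARD('i \<Rightarrow> bool) * card (obs_space Sv) * \<eta>"
  assumes mar: "simple_MAR Sv M" and s: "s \<in> state_space Sv" and visit: "visit_prob s > 0"
    and n: "n > 0" and \<eta>: "\<eta> > 0" and accurate: "accurate_counts n \<eta> D"
    and gap: "\<forall>w\<in>obs_space Sv. 0 < expected_count w \<longrightarrow> \<eta> \<le> expected_count w"
    and \<epsilon>: "\<epsilon> > 0" and slack: "2 * c \<le> visit_prob s" "4 * c \<le> \<epsilon> * visit_prob s"
  shows "\<bar>AsMAR Sv D s z - pmf (M s) z\<bar> \<le> \<epsilon>"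
proof -
  let ?V = "expected_agreeing_visits (I_always_hat Sv D) s"
  have V: "visit_prob s \<le> ?V"
    by (rule visit_prob_le_expected_agreeing_visits)
  show ?thesis
  proof (cases "compatible z s")
    case False
    then have "pmf (M s) z = 0"
      using compatible_if_in_set_pmf[OF s] by (meson set_pmf_iff)
    then show ?thesis
      using False \<epsilon> unfolding AsMAR_def by simp
  next
    case True
    have q: "0 \<le> pattern_prob M s (fR z)" "pattern_prob M s (fR z) \<le> 1"
      unfolding pattern_prob_def by simp_all
    have "1 \<le> CARD('i \<Rightarrow> bool)"
      by (simp add: Suc_le_eq)
    then have "1 * (card (obs_space Sv) * \<eta>) \<le> CARD('i \<Rightarrow> bool) * (card (obs_space Sv) * \<eta>)"
      using \<eta> by (intro mult_right_mono) simp_all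
    then have "card (obs_space Sv) * \<eta> \<le> c"
      unfolding c_def by (simp add: mult.assoc)
    then have "\<bar>real (count_sr Sv D s (fR z)) / (\<Sum>r\<in>UNIV. real (count_sr Sv D s r))
        - (pattern_prob M s (fR z) * ?V) / ?V\<bar> \<le> \<epsilon>"
      using count_sr_deviation[OF mar s visit \<eta> accurate gap, of "fR z"]
        sum_count_sr_deviation[OF mar s visit \<eta> accurate gap] n visit V q slack \<epsilon>
      by (intro abs_divide_diff_le[where c=c])
        (auto simp: c_def mult_left_le_one_le mult_left_mono intro: order_trans mult_left_mono)
    then show ?thesis
      using True visit V pmf_eq_pattern_prob[OF s True] unfolding AsMAR_def by simp
  qed
qed

end

section \<open>Sampling the dataset\<close>

lemma exists_pos_le_finite:
  fixes f :: "'a \<Rightarrow> real"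
  assumes "finite A" and "\<And>a. a \<in> A \<Longrightarrow> 0 < f a"
  shows "\<exists>\<eta>>0. \<forall>a\<in>A. \<eta> \<le> f a"
  using assms by (intro exI[of _ "Min (insert 1 (f ` A))"]) auto

lemma None_in_obs_space: "(\<lambda>_. None) \<in> obs_space Sv"
  unfolding obs_space_def by (simp add: PiE_iff)

context miss_mdp_behaviour
begin

lemma count_obs_eq_0_if_expected_count_eq_0:
  assumes "D \<in> set_pmf (iid_pmf n (history_pmf T \<iota> M pol L))" and "expected_count w = 0"
  shows "count_obs D w = 0"
  using set_pmf_iid_pmf[OF assms(1)] obs_count_eq_0_if_expected_count_eq_0[OF _ assms(2)]
  unfolding count_obs_def obs_count_def[symmetric] by (simp add: subset_iff)

lemma prob_count_obs_deviation:
  fixes n :: nat and \<eta> :: real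
  assumes "n > 0" and "\<eta> > 0"
  shows "measure_pmf.prob (iid_pmf n (history_pmf T \<iota> M pol L))
      {D. n * \<eta> \<le> \<bar>real (count_obs D w) - n * expected_count w\<bar>} \<le> (real L)\<^sup>2 / (n * \<eta>\<^sup>2)"
proof -
  have "\<bar>real (obs_count w h) - expected_count w\<bar> \<le> real L"
    if "h \<in> set_pmf (history_pmf T \<iota> M pol L)" for h
  proof -
    have "real (obs_count w h) \<le> L"
      using length_if_in_set_pmf_history_pmf[OF that] unfolding obs_count_def
      by (metis length_filter_le of_nat_le_iff)
    then show ?thesis
      using expected_count_nonneg[of w] expected_count_le[of w] unfolding abs_le_iff by linarith
  qed
  from prob_iid_sum_deviation[OF finite_set_pmf_history_pmf this[unfolded expected_count_def] assms]
  show ?thesis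
    unfolding real_count_obs expected_count_def .
qed

lemma prob_accurate_counts:
  fixes n :: nat and \<eta> :: real
  assumes n: "n > 0" and \<eta>: "\<eta> > 0"
  shows "1 - card (obs_space Sv) * ((real L)\<^sup>2 / (n * \<eta>\<^sup>2))
    \<le> measure_pmf.prob (iid_pmf n (history_pmf T \<iota> M pol L)) {D. accurate_counts n \<eta> D}"
proof -
  let ?P = "iid_pmf n (history_pmf T \<iota> M pol L)"
  let ?bad = "\<lambda>w. {D. n * \<eta> \<le> \<bar>real (count_obs D w) - n * expected_count w\<bar>}"
  have "accurate_counts n \<eta> D \<longleftrightarrow> D \<in> UNIV - (\<Union>w\<in>obs_space Sv. ?bad w)" if "D \<in> set_pmf ?P" for D
    using count_obs_eq_0_if_expected_count_eq_0[OF that] unfolding accurate_counts_def by (auto simp: not_le)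
  then have "measure_pmf.prob ?P {D. accurate_counts n \<eta> D} = measure_pmf.prob ?P (UNIV - (\<Union>w\<in>obs_space Sv. ?bad w))"
    by (intro measure_pmf.finite_measure_eq_AE) (auto simp: AE_measure_pmf_iff)
  also have "\<dots> = 1 - measure_pmf.prob ?P (\<Union>w\<in>obs_space Sv. ?bad w)"
    using measure_pmf.prob_compl[of "\<Union>w\<in>obs_space Sv. ?bad w" ?P] by simp
  finally have "measure_pmf.prob ?P {D. accurate_counts n \<eta> D} = 1 - measure_pmf.prob ?P (\<Union>w\<in>obs_space Sv. ?bad w)" .
  moreover have "measure_pmf.prob ?P (\<Union>w\<in>obs_space Sv. ?bad w) \<le> (\<Sum>w\<in>obs_space Sv. measure_pmf.prob ?P (?bad w))"
    by (intro measure_pmf.finite_measure_subadditive_finite finite_obs_space) auto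
  moreover have "\<dots> \<le> card (obs_space Sv) * ((real L)\<^sup>2 / (n * \<eta>\<^sup>2))"
    using sum_mono[of "obs_space Sv", OF prob_count_obs_deviation[OF n \<eta>]] by simp
  ultimately show ?thesis
    by linarith
qed

end

lemma AsMAR_nonneg_le_1: "0 \<le> AsMAR Sv D s z \<and> AsMAR Sv D s z \<le> 1"
proof -
  let ?S = "\<Sum>r\<in>UNIV. real (count_sr Sv D s r)"
  have "real (count_sr Sv D s (fR z)) \<le> ?S"
    by (rule member_le_sum) simp_all
  then show ?thesis
    unfolding AsMAR_def by (cases "?S = 0") (auto simp: divide_le_eq_1)
qed

lemma abs_AsMAR_diff_le_1: "\<bar>AsMAR Sv D s z - pmf p z\<bar> \<le> 1"
  using AsMAR_nonneg_le_1[of Sv D s z] pmf_le_1[of p z] pmf_nonneg[of p z]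
  unfolding abs_le_iff by linarith

lemma AsMAR_error_bounded:
  fixes \<delta> :: real
  assumes "\<delta> \<le> 1"
  shows "\<exists>\<epsilon>>0. \<delta> \<le> measure_pmf.prob P
    {D. \<forall>s\<in>state_space Sv. R s \<longrightarrow> (\<forall>z\<in>obs_space Sv. \<bar>AsMAR Sv D s z - pmf (M s) z\<bar> \<le> \<epsilon>)}"
proof -
  have all: "{D. \<forall>s\<in>state_space Sv. R s \<longrightarrow>
      (\<forall>z\<in>obs_space Sv. \<bar>AsMAR Sv D s z - pmf (M s) z\<bar> \<le> 1)} = UNIV"
    using abs_AsMAR_diff_le_1 by blast
  show ?thesis
    using assms by (intro exI[of _ 1]) (simp only: all, simp)
qed

context miss_mdp_behaviour
begin

lemma visit_prob_pos: "fair T \<iota> M pol L \<Longrightarrow> reachable T \<iota> M s \<Longrightarrow> 0 < visit_prob s"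
  unfolding fair_def visit_prob_def by blast

lemma exists_tolerance:
  fixes \<epsilon> :: real
  defines "C \<equiv> real (CARD('i \<Rightarrow> bool) * card (obs_space Sv))"
  assumes fair: "fair T \<iota> M pol L" and \<epsilon>: "\<epsilon> > 0"
  shows "\<exists>\<eta>>0. (\<forall>w\<in>obs_space Sv. 0 < expected_count w \<longrightarrow> \<eta> \<le> expected_count w) \<and>
    (\<forall>s. reachable T \<iota> M s \<longrightarrow> 2 * (C * \<eta>) \<le> visit_prob s \<and> 4 * (C * \<eta>) \<le> \<epsilon> * visit_prob s)"
proof -
  have "0 < card (obs_space Sv)"
    using None_in_obs_space[of Sv] finite_obs_space card_gt_0_iff by blast
  then have C: "C > 0"
    unfolding C_def by (simp add: zero_less_card_finite)
  have "finite {w\<in>obs_space Sv. 0 < expected_count w}"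
    by (simp add: finite_obs_space)
  then obtain \<eta>1 where \<eta>1: "\<eta>1 > 0" "\<forall>w\<in>{w\<in>obs_space Sv. 0 < expected_count w}. \<eta>1 \<le> expected_count w"
    using exists_pos_le_finite[of _ expected_count] by blast
  define bound where "bound s = min (visit_prob s / (2 * C)) (\<epsilon> * visit_prob s / (4 * C))" for s
  have "finite {s\<in>state_space Sv. reachable T \<iota> M s}"
    by (simp add: finite_state_space)
  moreover have "0 < bound s" if "s \<in> {s\<in>state_space Sv. reachable T \<iota> M s}" for s
    using that visit_prob_pos[OF fair] C \<epsilon> unfolding bound_def by simp
  ultimately obtain \<eta>2 where \<eta>2: "\<eta>2 > 0" "\<forall>s\<in>{s\<in>state_space Sv. reachable T \<iota> M s}. \<eta>2 \<le> bound s"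
    using exists_pos_le_finite[of _ bound] by blast
  show ?thesis
  proof (intro exI[of _ "min \<eta>1 \<eta>2"] conjI allI impI ballI)
    fix s
    assume "reachable T \<iota> M s"
    then have "\<eta>2 \<le> bound s"
      using \<eta>2(2) reachable_in_state_space by blast
    then have "min \<eta>1 \<eta>2 \<le> visit_prob s / (2 * C)" "min \<eta>1 \<eta>2 \<le> \<epsilon> * visit_prob s / (4 * C)"
      unfolding bound_def by linarith+
    then show "2 * (C * min \<eta>1 \<eta>2) \<le> visit_prob s" "4 * (C * min \<eta>1 \<eta>2) \<le> \<epsilon> * visit_prob s"
      using C by (simp_all add: pos_le_divide_eq mult_ac)
  next
    fix w
    assume "w \<in> obs_space Sv" and "0 < expected_count w"
    then show "min \<eta>1 \<eta>2 \<le> expected_count w"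
      using \<eta>1(2) by force
  qed (use \<eta>1(1) \<eta>2(1) in simp)
qed

lemma AsMAR_consistent:
  fixes \<epsilon> \<delta> :: real
  assumes mar: "simple_MAR Sv M" and fair: "fair T \<iota> M pol L"
    and \<epsilon>: "\<epsilon> > 0" and \<delta>: "0 < \<delta>" "\<delta> < 1"
  shows "\<exists>n. \<delta> \<le> measure_pmf.prob (iid_pmf n (history_pmf T \<iota> M pol L))
    {D. \<forall>s\<in>state_space Sv. reachable T \<iota> M s \<longrightarrow> (\<forall>z\<in>obs_space Sv. \<bar>AsMAR Sv D s z - pmf (M s) z\<bar> \<le> \<epsilon>)}"
proof -
  obtain \<eta> :: real where \<eta>: "\<eta> > 0"
    and gap: "\<forall>w\<in>obs_space Sv. 0 < expected_count w \<longrightarrow> \<eta> \<le> expected_count w"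
    and slack: "\<forall>s. reachable T \<iota> M s \<longrightarrow>
      2 * (CARD('i \<Rightarrow> bool) * card (obs_space Sv) * \<eta>) \<le> visit_prob s \<and>
      4 * (CARD('i \<Rightarrow> bool) * card (obs_space Sv) * \<eta>) \<le> \<epsilon> * visit_prob s"
    using exists_tolerance[OF fair \<epsilon>] by (auto simp: mult.assoc)
  define n where "n = Suc (nat \<lceil>card (obs_space Sv) * (real L)\<^sup>2 / (\<eta>\<^sup>2 * (1 - \<delta>))\<rceil>)"
  have n: "n > 0"
    unfolding n_def by simp
  have "card (obs_space Sv) * (real L)\<^sup>2 / (\<eta>\<^sup>2 * (1 - \<delta>)) \<le> n"
    unfolding n_def by linarith
  then have bound: "card (obs_space Sv) * ((real L)\<^sup>2 / (n * \<eta>\<^sup>2)) \<le> 1 - \<delta>"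
    using \<eta> \<delta> n by (simp add: field_simps)
  have "{D. accurate_counts n \<eta> D} \<subseteq>
      {D. \<forall>s\<in>state_space Sv. reachable T \<iota> M s \<longrightarrow> (\<forall>z\<in>obs_space Sv. \<bar>AsMAR Sv D s z - pmf (M s) z\<bar> \<le> \<epsilon>)}"
  proof (intro subsetI CollectI ballI impI)
    fix D s z
    assume "D \<in> {D. accurate_counts n \<eta> D}" and s: "s \<in> state_space Sv" and reach: "reachable T \<iota> M s"
    then show "\<bar>AsMAR Sv D s z - pmf (M s) z\<bar> \<le> \<epsilon>"
      using AsMAR_close[OF mar s visit_prob_pos[OF fair reach] n \<eta> _ gap \<epsilon>] slack by simp
  qed
  then have "measure_pmf.prob (iid_pmf n (history_pmf T \<iota> M pol L)) {D. accurate_counts n \<eta> D} \<le>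
      measure_pmf.prob (iid_pmf n (history_pmf T \<iota> M pol L))
        {D. \<forall>s\<in>state_space Sv. reachable T \<iota> M s \<longrightarrow> (\<forall>z\<in>obs_space Sv. \<bar>AsMAR Sv D s z - pmf (M s) z\<bar> \<le> \<epsilon>)}"
    by (rule measure_pmf.finite_measure_mono) simp
  then show ?thesis
    using prob_accurate_counts[OF n \<eta>] bound by (intro exI[of _ n]) linarith
qed

end

theorem theorem1:
  fixes Sv :: "'i::finite \<Rightarrow> 'v set"
    and T :: "('i,'v) state \<Rightarrow> 'a::finite \<Rightarrow> ('i,'v) state pmf"
    and \<iota> :: "('i,'v) state pmf"
    and M :: "('i,'v) state \<Rightarrow> ('i,'v) obs pmf"
    and \<pi>b :: "('i,'v,'a) policy"
    and L :: nat
  assumes mdp: "miss_MDP Sv T \<iota> M"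
    and mar: "simple_MAR Sv M"
    and fair: "fair T \<iota> M \<pi>b L"
  shows "(\<forall>\<epsilon>>0. \<forall>\<delta>. 0 < \<delta> \<and> \<delta> < 1 \<longrightarrow>
           (\<exists>nstar::nat. measure_pmf.prob (iid_pmf nstar (history_pmf T \<iota> M \<pi>b L))
              {D. \<forall>s\<in>state_space Sv. reachable T \<iota> M s \<longrightarrow>
                    (\<forall>z\<in>obs_space Sv. \<bar>AsMAR Sv D s z - Mprob M s z\<bar> \<le> \<epsilon>)} \<ge> \<delta>))
       \<and> (\<forall>k::nat. \<forall>\<delta>. 0 < \<delta> \<and> \<delta> < 1 \<longrightarrow>
           (\<exists>\<epsilon>>0. measure_pmf.prob (iid_pmf k (history_pmf T \<iota> M \<pi>b L))
              {D. \<forall>s\<in>state_space Sv. reachable T \<iota> M s \<longrightarrow>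
                    (\<forall>z\<in>obs_space Sv. \<bar>AsMAR Sv D s z - Mprob M s z\<bar> \<le> \<epsilon>)} \<ge> \<delta>))"
proof -
  interpret miss_mdp_behaviour Sv T \<iota> M \<pi>b L
    by unfold_locales (rule mdp)
  show ?thesis
    using AsMAR_consistent[OF mar fair] AsMAR_error_bounded[where R="reachable T \<iota> M", OF less_imp_le]
    by (intro conjI allI impI) auto
qed

end
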